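(* Let $n\ge 3$ and let $f=f(x,y_0,\dots,y_n)$ be a smooth function on a connected open subset $U$ of $J^n(\mathbb R,\mathbb R)$ with $\frac{\partial^2 f}{\partial y_n^2}\neq 0$ everywhere on $U$. Let $D$ be the rank $2$ distribution on $U\times\mathbb R$ (coordinates $(x,y_0,\dots,y_n,z)$) spanned by $$X_1=\frac{\partial}{\partial x}+y_1\frac{\partial}{\partial y_0}+\dots+y_n\frac{\partial}{\partial y_{n-1}}+f\frac{\partial}{\partial z},\qquad X_2=\frac{\partial}{\partial y_n}.$$ Then the space of all infinitesimal symmetries of $D$ that lie in $D^3$ is a one-dimensional real vector space, spanned by $\frac{\partial}{\partial z}$.
   Context: $J^n(\mathbb R,\mathbb R)$ is the jet space with standard coordinates $(x,y_0,\dots,y_n)$. For a distribution $D$, the derived flag is $D^1=D$, $D^{i+1}=D^i+[D,D^i]$. An infinitesimal symmetry of $D$ is a vector field $Y$ with $[Y,\Gamma(D)]\subset\Gamma(D)$ (i.e. its local flow preserves $D$); $Y$ lies in $D^3$ if $Y(q)\in D^3(q)$ for all $q$. The distribution $D$ is said to be associated with the underdetermined ODE $z'=f(x,y,y',\dots,y^{(n)})$ (or with the Lagrangian $f\,dx$). *)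

theory Defs
  imports "HOL-Analysis.Analysis"
begin

definition pd :: "'m::finite \<Rightarrow> (real^'m \<Rightarrow> real) \<Rightarrow> real^'m \<Rightarrow> real" where
  "pd i g p = deriv (\<lambda>t. g (p + t *\<^sub>R axis i 1)) 0"

definition smooth_on :: "(real^'m::finite) set \<Rightarrow> (real^'m \<Rightarrow> real) \<Rightarrow> bool" where
  "smooth_on S g \<longleftrightarrow>
     (\<forall>is. continuous_on S (fold pd is g) \<and>
        (\<forall>i. \<forall>p\<in>S. (\<lambda>t. fold pd is g (p + t *\<^sub>R axis i 1)) differentiable (at 0)))"

text \<open>Vector fields on an open subset of real^'m are maps real^'m => real^'m (only values on the set matter).\<close>
definition vf_smooth :: "(real^'m::finite) set \<Rightarrow> (real^'m \<Rightarrow> real^'m) \<Rightarrow> bool" where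
  "vf_smooth S Y \<longleftrightarrow> (\<forall>j. smooth_on S (\<lambda>p. Y p $ j))"

definition vf_apply :: "(real^'m::finite \<Rightarrow> real^'m) \<Rightarrow> (real^'m \<Rightarrow> real) \<Rightarrow> real^'m \<Rightarrow> real" where
  "vf_apply Y g p = (\<Sum>i\<in>UNIV. Y p $ i * pd i g p)"

definition lie_bracket :: "(real^'m::finite \<Rightarrow> real^'m) \<Rightarrow> (real^'m \<Rightarrow> real^'m) \<Rightarrow> real^'m \<Rightarrow> real^'m" where
  "lie_bracket Y X p = (\<chi> j. vf_apply Y (\<lambda>q. X q $ j) p - vf_apply X (\<lambda>q. Y q $ j) p)"

definition smod :: "(real^'m::finite) set \<Rightarrow> (real^'m \<Rightarrow> real^'m) set \<Rightarrow> (real^'m \<Rightarrow> real^'m) set" where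
  "smod W S = {(\<lambda>p. \<Sum>k<N. c k p *\<^sub>R V k p) | (N::nat) c V.
                  \<forall>k<N. smooth_on W (c k) \<and> V k \<in> S}"

definition sections2 :: "(real^'m::finite) set \<Rightarrow> (real^'m \<Rightarrow> real^'m) \<Rightarrow> (real^'m \<Rightarrow> real^'m) \<Rightarrow> (real^'m \<Rightarrow> real^'m) set" where
  "sections2 W X1 X2 = smod W {X1, X2}"

fun derived :: "(real^'m::finite) set \<Rightarrow> (real^'m \<Rightarrow> real^'m) set \<Rightarrow> nat \<Rightarrow> (real^'m \<Rightarrow> real^'m) set" where
  "derived W G 0 = G"
| "derived W G (Suc 0) = G"
| "derived W G (Suc (Suc i)) =
     smod W (derived W G (Suc i) \<union> {lie_bracket A B | A B. A \<in> G \<and> B \<in> derived W G (Suc i)})"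

definition sec_in :: "(real^'m::finite) set \<Rightarrow> (real^'m \<Rightarrow> real^'m) set \<Rightarrow> (real^'m \<Rightarrow> real^'m) \<Rightarrow> bool" where
  "sec_in W G V \<longleftrightarrow> (\<exists>V'\<in>G. \<forall>p\<in>W. V p = V' p)"

definition inf_symmetry :: "(real^'m::finite) set \<Rightarrow> (real^'m \<Rightarrow> real^'m) set \<Rightarrow> (real^'m \<Rightarrow> real^'m) \<Rightarrow> bool" where
  "inf_symmetry W G Y \<longleftrightarrow> vf_smooth W Y \<and> (\<forall>V\<in>G. sec_in W G (lie_bracket Y V))"

definition lies_in :: "(real^'m::finite) set \<Rightarrow> (real^'m \<Rightarrow> real^'m) set \<Rightarrow> (real^'m \<Rightarrow> real^'m) \<Rightarrow> bool" where
  "lies_in W G Y \<longleftrightarrow> (\<forall>q\<in>W. Y q \<in> {V q | V. V \<in> G})"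

text \<open>Jet space J^n(R,R) = real^'j with an enumeration e of coordinates:
  e 0 = x, e (k+1) = y_k (k = 0..n). The space J^n x R is real^('j option), with
  Some k the jet coordinates and None the z coordinate.\<close>
definition jproj :: "real^('j::finite option) \<Rightarrow> real^'j" where
  "jproj p = (\<chi> k. p $ Some k)"

definition X1_field :: "nat \<Rightarrow> (nat \<Rightarrow> 'j::finite) \<Rightarrow> (real^'j \<Rightarrow> real) \<Rightarrow> real^('j option) \<Rightarrow> real^('j option)" where
  "X1_field n e f p = (\<chi> c. case c of
       None \<Rightarrow> f (jproj p)
     | Some k \<Rightarrow> (if k = e 0 then 1
                  else if (\<exists>i<n. k = e (i + 1)) then p $ Some (e (inv_into {..<n+2} e k + 1))
                  else 0))"

definition X2_field :: "nat \<Rightarrow> (nat \<Rightarrow> 'j::finite) \<Rightarrow> real^('j option) \<Rightarrow> real^('j option)" where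
  "X2_field n e p = axis (Some (e (n + 1))) 1"

end

theory Submission
  imports Defs
begin

(*
  The third derived distribution is annihilated by the contact forms dy_i - y_(i+1) dx with
  i < n - 2; as n >= 3 this includes dy_0 - y_1 dx, so a symmetry Y in D^3 satisfies
  Y^(y_0) = xi y_1 with xi = Y^x.  The conditions [Y, X1], [Y, X2] in D propagate this to
  Y^(y_j) = xi X1^(y_j) for all j <= n, and differentiating Y^(y_(n-1)) = xi y_n in y_n
  forces xi = 0.  Hence Y = zeta d/dz, where zeta is annihilated by X1 and d/dy_n.  Commuting
  d/dy_m past X1 produces d/dy_(m-1) + f_(y_m) d/dz; for m = n and one more y_n-derivative,
  f_(y_n y_n) <> 0 gives d zeta/dz = 0, after which all partial derivatives of zeta vanish
  by descending induction, so zeta is constant on the connected domain.  Conversely d/dz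
  commutes with X1 and X2, and it is a multiple of [X2, [X2, X1]] = f_(y_n y_n) d/dz in D^3.
*)

section \<open>Partial derivatives\<close>

abbreviation partially_differentiable_at :: "'m \<Rightarrow> (real^'m::finite \<Rightarrow> real) \<Rightarrow> real^'m \<Rightarrow> bool" where
  "partially_differentiable_at i g p \<equiv> (\<lambda>t. g (p + t *\<^sub>R axis i 1)) differentiable (at (0::real))"

definition partially_differentiable_on :: "(real^'m::finite) set \<Rightarrow> (real^'m \<Rightarrow> real) \<Rightarrow> bool" where
  "partially_differentiable_on S g \<longleftrightarrow> (\<forall>i. \<forall>p\<in>S. partially_differentiable_at i g p)"

lemma eventually_line_in_open:
  fixes p v :: "'a::real_normed_vector"
  assumes "open S" "p \<in> S"
  shows "\<forall>\<^sub>F t in nhds (0::real). p + t *\<^sub>R v \<in> S"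
proof -
  have "((\<lambda>t. p + t *\<^sub>R v) \<longlongrightarrow> p + 0 *\<^sub>R v) (nhds (0::real))"
    by (intro tendsto_intros filterlim_ident)
  then have "((\<lambda>t. p + t *\<^sub>R v) \<longlongrightarrow> p) (nhds (0::real))" by simp
  then show ?thesis using topological_tendstoD assms by blast
qed

lemma eventually_line_eq_open:
  fixes p v :: "'a::real_normed_vector"
  assumes "open S" "p \<in> S" "\<forall>q\<in>S. g q = h q"
  shows "\<forall>\<^sub>F t in nhds (0::real). g (p + t *\<^sub>R v) = h (p + t *\<^sub>R v)"
  using eventually_line_in_open[OF assms(1,2), of v] assms(3) by (auto elim: eventually_mono)

lemma pd_cong_open:
  assumes "open S" "p \<in> S" "\<forall>q\<in>S. g q = h q"
  shows "pd i g p = pd i h p"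
  unfolding pd_def by (rule deriv_cong_ev[OF eventually_line_eq_open[OF assms] refl])

lemma partially_differentiable_at_cong_open:
  assumes "open S" "p \<in> S" "\<forall>q\<in>S. g q = h q" "partially_differentiable_at i g p"
  shows "partially_differentiable_at i h p"
proof -
  from assms(4) obtain D where "((\<lambda>t. g (p + t *\<^sub>R axis i 1)) has_field_derivative D) (at 0)"
    by (metis DERIV_deriv_iff_real_differentiable)
  then have "((\<lambda>t. h (p + t *\<^sub>R axis i 1)) has_field_derivative D) (at 0)"
    using DERIV_cong_ev[OF refl eventually_line_eq_open[OF assms(1-3)] refl] by simp
  then show ?thesis using real_differentiable_def by blast
qed

lemma has_field_derivative_pd:
  assumes "partially_differentiable_at i g p"
  shows "((\<lambda>t. g (p + t *\<^sub>R axis i 1)) has_field_derivative pd i g p) (at 0)"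
  using assms unfolding pd_def by (simp add: DERIV_deriv_iff_real_differentiable)

lemma pd_eqI:
  assumes "((\<lambda>t. g (p + t *\<^sub>R axis i 1)) has_field_derivative D) (at 0)"
  shows "pd i g p = D"
  using assms unfolding pd_def by (rule DERIV_imp_deriv)

lemma pd_add:
  assumes "partially_differentiable_at i g p" "partially_differentiable_at i h p"
  shows "pd i (\<lambda>q. g q + h q) p = pd i g p + pd i h p"
  by (rule pd_eqI) (intro DERIV_add has_field_derivative_pd assms)

lemma pd_mult:
  assumes "partially_differentiable_at i g p" "partially_differentiable_at i h p"
  shows "pd i (\<lambda>q. g q * h q) p = pd i g p * h p + g p * pd i h p"
  by (rule pd_eqI)
    (use DERIV_mult[OF has_field_derivative_pd[OF assms(1)] has_field_derivative_pd[OF assms(2)]]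
      in \<open>simp add: ac_simps\<close>)

lemma pd_sum:
  assumes "\<And>k. k \<in> A \<Longrightarrow> partially_differentiable_at i (g k) p"
  shows "pd i (\<lambda>q. \<Sum>k\<in>A. g k q) p = (\<Sum>k\<in>A. pd i (g k) p)"
  by (rule pd_eqI, rule DERIV_sum, rule has_field_derivative_pd, rule assms)

lemma pd_const: "pd i (\<lambda>q. c) p = 0"
  unfolding pd_def by simp

lemma pd_coord: "pd i (\<lambda>q. q $ j) p = (if i = j then 1 else 0)"
  by (rule pd_eqI) (auto simp: axis_def intro!: derivative_eq_intros)

lemma partially_differentiable_coord: "partially_differentiable_at i (\<lambda>q. q $ j) p"
  by (auto simp: axis_def intro!: derivative_intros)

lemma pd_eq_0_if_constant_on_line:
  assumes "\<forall>t. h (p + t *\<^sub>R axis i 1) = h p"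
  shows "pd i h p = 0" and "partially_differentiable_at i h p"
  using assms unfolding pd_def by simp_all

lemma pd_times_coord:
  assumes "open S" "q \<in> S" "\<forall>p\<in>S. h p = a p * p $ c" "partially_differentiable_at l a q"
  shows "pd l h q = pd l a q * q $ c + a q * (if l = c then 1 else 0)"
proof -
  have "pd l h q = pd l (\<lambda>p. a p * p $ c) q" by (rule pd_cong_open[OF assms(1-3)])
  also have "\<dots> = pd l a q * q $ c + a q * pd l (\<lambda>p. p $ c) q"
    by (rule pd_mult[OF assms(4) partially_differentiable_coord])
  finally show ?thesis by (simp add: pd_coord)
qed

lemma fold_pd_cong_open:
  assumes "open S" "\<forall>q\<in>S. g q = h q"
  shows "\<forall>q\<in>S. fold pd is g q = fold pd is h q"
  using assms(2)
proof (induction "is" arbitrary: g h)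
  case (Cons i "is")
  then show ?case using pd_cong_open[OF assms(1)] by (metis fold_simps(2))
qed simp

lemma fold_pd_const: "fold pd is (\<lambda>q. c) = (\<lambda>q. if is = [] then c else 0)"
  by (induction "is" arbitrary: c) (simp_all add: pd_const[abs_def])

lemma has_field_derivative_along_axis:
  assumes "partially_differentiable_at c g (p + s *\<^sub>R axis c 1)"
  shows "((\<lambda>s. g (p + s *\<^sub>R axis c 1)) has_field_derivative pd c g (p + s *\<^sub>R axis c 1)) (at s)"
proof -
  have "(\<lambda>u. g ((p + s *\<^sub>R axis c 1) + u *\<^sub>R axis c 1)) = (\<lambda>u. g (p + (u + s) *\<^sub>R axis c 1))"
    by (simp add: scaleR_add_left algebra_simps)
  then show ?thesis
    using has_field_derivative_pd[OF assms] DERIV_shift[of "\<lambda>s. g (p + s *\<^sub>R axis c 1)" _ 0 s] by simp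
qed

lemma pd_eq_0_imp_constant_on_line:
  fixes g :: "real^'m::finite \<Rightarrow> real"
  assumes "convex I" "\<forall>s\<in>I. p + s *\<^sub>R axis c 1 \<in> S"
    and "\<forall>q\<in>S. pd c g q = 0" "partially_differentiable_on S g"
    and "s1 \<in> I" "s2 \<in> I"
  shows "g (p + s1 *\<^sub>R axis c 1) = g (p + s2 *\<^sub>R axis c 1)"
proof -
  have "\<exists>c0. \<forall>s\<in>I. g (p + s *\<^sub>R axis c 1) = c0"
  proof (rule has_field_derivative_zero_constant[OF assms(1)])
    fix s assume "s \<in> I"
    then show "((\<lambda>s. g (p + s *\<^sub>R axis c 1)) has_field_derivative 0) (at s within I)"
      using has_field_derivative_along_axis[where c=c and g=g and p=p and s=s] assms(2-4)
      unfolding partially_differentiable_on_def by (auto intro: has_field_derivative_at_within)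
  qed
  then show ?thesis using assms(5,6) by auto
qed

lemma pd_eq_0_imp_translation_invariant:
  fixes g :: "real^'m::finite \<Rightarrow> real"
  assumes "open S" "q \<in> S" "\<forall>q\<in>S. pd d g q = 0" "partially_differentiable_on S g"
  obtains r where "r > 0"
    "\<And>s t. \<bar>s\<bar> < r \<Longrightarrow> \<bar>t\<bar> < r \<Longrightarrow> g (q + s *\<^sub>R axis d 1 + t *\<^sub>R axis l 1) = g (q + t *\<^sub>R axis l 1)"
proof -
  obtain r where r: "r > 0" "ball q r \<subseteq> S" using assms(1,2) open_contains_ball by blast
  have in_S: "q + t *\<^sub>R axis l 1 + s *\<^sub>R axis d 1 \<in> S" if "\<bar>s\<bar> < r/2" "\<bar>t\<bar> < r/2" for s t
  proof -
    have "norm (t *\<^sub>R axis l (1::real) + s *\<^sub>R axis d 1) \<le> \<bar>t\<bar> + \<bar>s\<bar>"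
      using norm_triangle_ineq[of "t *\<^sub>R axis l (1::real)" "s *\<^sub>R axis d 1"] by simp
    moreover have "dist q (q + t *\<^sub>R axis l 1 + s *\<^sub>R axis d 1) = norm (t *\<^sub>R axis l (1::real) + s *\<^sub>R axis d 1)"
      by (metis add.assoc add_diff_cancel_left' dist_commute dist_norm)
    ultimately have "q + t *\<^sub>R axis l 1 + s *\<^sub>R axis d 1 \<in> ball q r"
      using that by simp
    then show ?thesis using r by blast
  qed
  show ?thesis
  proof (rule that[of "r/2"])
    fix s t assume "\<bar>s\<bar> < r/2" "\<bar>t\<bar> < r/2"
    then have "g (q + t *\<^sub>R axis l 1 + s *\<^sub>R axis d 1) = g (q + t *\<^sub>R axis l 1 + 0 *\<^sub>R axis d 1)"
      using in_S r(1) assms(3,4)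
      by (intro pd_eq_0_imp_constant_on_line[OF convex_ball[of 0 "r/2"], where S = S]) auto
    then show "g (q + s *\<^sub>R axis d 1 + t *\<^sub>R axis l 1) = g (q + t *\<^sub>R axis l 1)"
      by (simp add: algebra_simps)
  qed (use r in simp)
qed

lemma pd_pd_eq_0:
  fixes g :: "real^'m::finite \<Rightarrow> real"
  assumes "open S" "partially_differentiable_on S g" "\<forall>q\<in>S. pd d g q = 0" "q \<in> S"
  shows "pd d (pd l g) q = 0"
proof -
  obtain r where r: "r > 0"
    and inv: "\<And>s t. \<bar>s\<bar> < r \<Longrightarrow> \<bar>t\<bar> < r \<Longrightarrow> g (q + s *\<^sub>R axis d 1 + t *\<^sub>R axis l 1) = g (q + t *\<^sub>R axis l 1)"
    using pd_eq_0_imp_translation_invariant[OF assms(1,4,3,2)] by blast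
  have small: "\<forall>\<^sub>F t in nhds (0::real). \<bar>t\<bar> < r"
    using eventually_nhds_in_open[of "ball 0 r" 0] r by (auto elim: eventually_mono simp: dist_real_def)
  have "pd l g (q + s *\<^sub>R axis d 1) = pd l g q" if "\<bar>s\<bar> < r" for s
    unfolding pd_def by (rule deriv_cong_ev[OF _ refl]) (use small inv that in \<open>auto elim: eventually_mono\<close>)
  then have "pd d (pd l g) q = deriv (\<lambda>s. pd l g q) 0"
    unfolding pd_def[of d] by (intro deriv_cong_ev[OF _ refl]) (use small in \<open>auto elim: eventually_mono\<close>)
  then show ?thesis by simp
qed

lemma constant_on_ball_if_pd_eq_0:
  fixes g :: "real^'m::finite \<Rightarrow> real"
  assumes "ball a r \<subseteq> S" "partially_differentiable_on S g" "\<forall>l. \<forall>q\<in>S. pd l g q = 0"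
    and "x \<in> ball a r"
  shows "g x = g a"
proof -
  define mix where "mix K = (\<chi> i. if i \<in> K then x $ i else a $ i)" for K
  \<comment> \<open>Move from a to x one coordinate at a time, staying inside the ball.\<close>
  have mix_const: "g (mix K) = g a" if "finite K" for K
    using that
  proof (induction K rule: finite_induct)
    case empty
    then show ?case by (simp add: mix_def)
  next
    case (insert c K)
    define \<delta> where "\<delta> = x $ c - a $ c"
    have step: "mix (insert c K) = mix K + \<delta> *\<^sub>R axis c 1"
      using insert.hyps(2) by (auto simp: vec_eq_iff mix_def \<delta>_def axis_def)
    have "mix K + s *\<^sub>R axis c 1 \<in> S" if "s \<in> closed_segment 0 \<delta>" for s
    proof -
      have "\<bar>s\<bar> \<le> \<bar>\<delta>\<bar>" using that by (cases "0 \<le> \<delta>") (auto simp: closed_segment_eq_real_ivl)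
      have "norm (mix K + s *\<^sub>R axis c 1 - a) \<le> norm (x - a)"
      proof (rule norm_le_componentwise_cart)
        fix i
        have "(mix K + s *\<^sub>R axis c 1 - a) $ i = (if i = c then s else if i \<in> K then x$i - a$i else 0)"
          using insert.hyps(2) by (simp add: mix_def axis_def)
        then show "norm ((mix K + s *\<^sub>R axis c 1 - a) $ i) \<le> norm ((x - a) $ i)"
          using \<open>\<bar>s\<bar> \<le> \<bar>\<delta>\<bar>\<close> by (simp add: \<delta>_def)
      qed
      also have "\<dots> < r" using assms(4) by (simp add: dist_norm norm_minus_commute)
      finally show ?thesis using assms(1) by (auto simp: dist_norm norm_minus_commute)
    qed
    then have "g (mix K + \<delta> *\<^sub>R axis c 1) = g (mix K + 0 *\<^sub>R axis c 1)"
      using assms(2,3)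
      by (intro pd_eq_0_imp_constant_on_line[OF convex_closed_segment[of 0 \<delta>]]) auto
    then show ?case using step insert.IH by simp
  qed
  have "mix UNIV = x" by (simp add: mix_def vec_eq_iff)
  then show ?thesis using mix_const[of UNIV] by simp
qed

lemma pd_eq_0_imp_constant:
  fixes g :: "real^'m::finite \<Rightarrow> real"
  assumes "open S" "connected S" "partially_differentiable_on S g" "\<forall>l. \<forall>q\<in>S. pd l g q = 0"
  shows "\<exists>c. \<forall>x\<in>S. g x = c"
proof -
  have "g constant_on S"
  proof (rule locally_constant_imp_constant[OF assms(2)])
    fix a assume "a \<in> S"
    then obtain r where r: "r > 0" "ball a r \<subseteq> S" using assms(1) open_contains_ball by blast
    have "openin (top_of_set S) (ball a r)" using r by (intro open_subset) auto
    moreover have "\<forall>x\<in>ball a r. g x = g a"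
      by (intro ballI constant_on_ball_if_pd_eq_0[OF r(2) assms(3,4)])
    moreover have "a \<in> ball a r" using r(1) by simp
    ultimately show "\<exists>T. openin (top_of_set S) T \<and> a \<in> T \<and> (\<forall>x\<in>T. g x = g a)"
      by blast
  qed
  then show ?thesis unfolding constant_on_def by blast
qed

section \<open>Smooth functions\<close>

lemma smooth_on_iff:
  "smooth_on S g \<longleftrightarrow>
     continuous_on S g \<and> partially_differentiable_on S g \<and> (\<forall>i. smooth_on S (pd i g))"
proof -
  have all_lists: "(\<forall>is. P is) \<longleftrightarrow> P [] \<and> (\<forall>i is. P (i # is))" for P :: "'a list \<Rightarrow> bool"
    by (metis list.exhaust)
  show ?thesis
    unfolding smooth_on_def partially_differentiable_on_def
    by (subst all_lists) auto
qed

lemma smooth_on_pd: "smooth_on S g \<Longrightarrow> smooth_on S (pd i g)"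
  using smooth_on_iff by blast

lemma smooth_on_imp_partially_differentiable_on: "smooth_on S g \<Longrightarrow> partially_differentiable_on S g"
  using smooth_on_iff by blast

lemma smooth_on_imp_partially_differentiable_at:
  "smooth_on S g \<Longrightarrow> p \<in> S \<Longrightarrow> partially_differentiable_at i g p"
  using smooth_on_iff partially_differentiable_on_def by blast

lemma smooth_on_coinduct:
  assumes S: "open S" and "g \<in> F"
    and F: "\<And>h. h \<in> F \<Longrightarrow> continuous_on S h \<and> partially_differentiable_on S h
                \<and> (\<forall>i. \<exists>h'\<in>F. \<forall>q\<in>S. pd i h q = h' q)"
  shows "smooth_on S g"
proof -
  have fold_in_F: "\<exists>h'\<in>F. \<forall>q\<in>S. fold pd is h q = h' q" if "h \<in> F" for "is" h
    using that
  proof (induction "is" arbitrary: h)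
    case (Cons i "is")
    obtain h' where h': "h' \<in> F" "\<forall>q\<in>S. pd i h q = h' q" using F Cons.prems by blast
    obtain h'' where h'': "h'' \<in> F" "\<forall>q\<in>S. fold pd is h' q = h'' q" using Cons.IH h'(1) by blast
    show ?case using fold_pd_cong_open[OF S h'(2), of "is"] h'' by auto
  qed auto
  show ?thesis
    unfolding smooth_on_def
  proof (intro allI conjI ballI)
    fix "is" i p
    obtain h' where h': "h' \<in> F" "\<forall>q\<in>S. fold pd is g q = h' q" using fold_in_F \<open>g \<in> F\<close> by blast
    show "continuous_on S (fold pd is g)"
      using F[OF h'(1)] h'(2) continuous_on_eq by metis
    assume "p \<in> S"
    then show "partially_differentiable_at i (fold pd is g) p"
      using F[OF h'(1)] partially_differentiable_at_cong_open[OF S \<open>p \<in> S\<close>, of h']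
        h'(2) unfolding partially_differentiable_on_def by auto
  qed
qed

(* The algebra generated by all iterated partials of smooth functions is closed under pd
   up to agreement on S (Leibniz rule), which makes smooth_on_coinduct applicable. *)
inductive_set fun_algebra :: "(real^'m::finite \<Rightarrow> real) set \<Rightarrow> (real^'m \<Rightarrow> real) set" for B where
  base: "g \<in> B \<Longrightarrow> g \<in> fun_algebra B"
| add: "g \<in> fun_algebra B \<Longrightarrow> h \<in> fun_algebra B \<Longrightarrow> (\<lambda>q. g q + h q) \<in> fun_algebra B"
| mult: "g \<in> fun_algebra B \<Longrightarrow> h \<in> fun_algebra B \<Longrightarrow> (\<lambda>q. g q * h q) \<in> fun_algebra B"

lemma fun_algebra_pd_closed:
  assumes S: "open S"
    and B: "\<And>g. g \<in> B \<Longrightarrow> continuous_on S g \<and> partially_differentiable_on S g \<and> (\<forall>i. pd i g \<in> B)"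
    and "h \<in> fun_algebra B"
  shows "continuous_on S h \<and> partially_differentiable_on S h
           \<and> (\<forall>i. \<exists>h'\<in>fun_algebra B. \<forall>q\<in>S. pd i h q = h' q)"
  using \<open>h \<in> fun_algebra B\<close>
proof (induction h rule: fun_algebra.induct)
  case (base g)
  then show ?case using B fun_algebra.base by blast
next
  case (add g h)
  show ?case
  proof (intro conjI allI)
    show "continuous_on S (\<lambda>q. g q + h q)" using add by (intro continuous_intros) auto
    show "partially_differentiable_on S (\<lambda>q. g q + h q)"
      using add unfolding partially_differentiable_on_def by simp
    fix i
    obtain g' h' where g': "g' \<in> fun_algebra B" "\<forall>q\<in>S. pd i g q = g' q"
      and h': "h' \<in> fun_algebra B" "\<forall>q\<in>S. pd i h q = h' q"
      using add by blast
    have "\<forall>q\<in>S. pd i (\<lambda>q. g q + h q) q = g' q + h' q"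
      using add g' h' pd_add[where i=i and g=g and h=h] unfolding partially_differentiable_on_def by simp
    then show "\<exists>F'\<in>fun_algebra B. \<forall>q\<in>S. pd i (\<lambda>q. g q + h q) q = F' q"
      by (intro bexI[OF _ fun_algebra.add[OF g'(1) h'(1)]])
  qed
next
  case (mult g h)
  show ?case
  proof (intro conjI allI)
    show "continuous_on S (\<lambda>q. g q * h q)" using mult by (intro continuous_intros) auto
    show "partially_differentiable_on S (\<lambda>q. g q * h q)"
      using mult unfolding partially_differentiable_on_def by simp
    fix i
    obtain g' h' where g': "g' \<in> fun_algebra B" "\<forall>q\<in>S. pd i g q = g' q"
      and h': "h' \<in> fun_algebra B" "\<forall>q\<in>S. pd i h q = h' q"
      using mult by blast
    have "\<forall>q\<in>S. pd i (\<lambda>q. g q * h q) q = g' q * h q + g q * h' q"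
      using mult g' h' pd_mult[where i=i and g=g and h=h] unfolding partially_differentiable_on_def by simp
    then show "\<exists>F'\<in>fun_algebra B. \<forall>q\<in>S. pd i (\<lambda>q. g q * h q) q = F' q"
      by (intro bexI[OF _ fun_algebra.add[OF fun_algebra.mult[OF g'(1) mult(2)]
            fun_algebra.mult[OF mult(1) h'(1)]]])
  qed
qed

lemma smooth_on_fun_algebra:
  assumes S: "open S" and smooth: "\<And>g. g \<in> Bs \<Longrightarrow> smooth_on S g"
    and h: "h \<in> fun_algebra {fold pd is g | is g. g \<in> Bs}"
  shows "smooth_on S h"
proof (rule smooth_on_coinduct[OF S h fun_algebra_pd_closed[OF S]])
  fix g assume "g \<in> {fold pd is g | is g. g \<in> Bs}"
  then obtain "is" g0 where g: "g = fold pd is g0" "g0 \<in> Bs" by blast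
  then have "pd i g = fold pd (is @ [i]) g0" for i by simp
  then show "continuous_on S g \<and> partially_differentiable_on S g
               \<and> (\<forall>i. pd i g \<in> {fold pd is g | is g. g \<in> Bs})"
    using g smooth smooth_on_iff[of S] unfolding smooth_on_def partially_differentiable_on_def by blast
qed

lemma derivative_closure_base: "g \<in> Bs \<Longrightarrow> g \<in> fun_algebra {fold pd is g | is g. g \<in> Bs}"
  by (rule fun_algebra.base) (metis (mono_tags, lifting) fold_Nil id_apply mem_Collect_eq)

lemma smooth_on_add:
  assumes "open S" "smooth_on S g" "smooth_on S h"
  shows "smooth_on S (\<lambda>q. g q + h q)"
proof (rule smooth_on_fun_algebra[OF assms(1)])
  show "(\<lambda>q. g q + h q) \<in> fun_algebra {fold pd is k | is k. k \<in> {g, h}}"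
    by (intro fun_algebra.add derivative_closure_base) simp_all
qed (use assms in auto)

lemma smooth_on_mult:
  assumes "open S" "smooth_on S g" "smooth_on S h"
  shows "smooth_on S (\<lambda>q. g q * h q)"
proof (rule smooth_on_fun_algebra[OF assms(1)])
  show "(\<lambda>q. g q * h q) \<in> fun_algebra {fold pd is k | is k. k \<in> {g, h}}"
    by (intro fun_algebra.mult derivative_closure_base) simp_all
qed (use assms in auto)

lemma smooth_on_const: "smooth_on S (\<lambda>q. c)"
  unfolding smooth_on_def fold_pd_const by auto

lemma smooth_on_diff:
  assumes "open S" "smooth_on S g" "smooth_on S h"
  shows "smooth_on S (\<lambda>q. g q - h q)"
  using smooth_on_add[OF assms(1,2) smooth_on_mult[OF assms(1) smooth_on_const assms(3)], of "-1"]
  by simp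

lemma smooth_on_sum:
  assumes "open S" "\<And>k. k \<in> A \<Longrightarrow> smooth_on S (g k)"
  shows "smooth_on S (\<lambda>q. \<Sum>k\<in>A. g k q)"
  using assms(2)
  by (induction A rule: infinite_finite_induct) (simp_all add: smooth_on_const smooth_on_add assms(1))

lemma smooth_on_coord: "smooth_on S (\<lambda>q. q $ j)"
  unfolding smooth_on_def
proof (intro allI conjI ballI)
  fix "is" i p
  show "continuous_on S (fold pd is (\<lambda>q. q $ j))"
    by (cases "is") (auto simp: pd_coord[abs_def] fold_pd_const intro!: continuous_intros)
  show "partially_differentiable_at i (fold pd is (\<lambda>q. q $ j)) p"
    by (cases "is") (auto simp: pd_coord[abs_def] fold_pd_const partially_differentiable_coord)
qed

lemma vf_apply_const: "vf_apply V (\<lambda>q. c) p = 0"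
  unfolding vf_apply_def by (simp add: pd_const)

lemma vf_apply_coord: "vf_apply V (\<lambda>q. q $ c) p = V p $ c"
proof -
  have "vf_apply V (\<lambda>q. q $ c) p = (\<Sum>i\<in>UNIV. if i = c then V p $ i else 0)"
    unfolding vf_apply_def pd_coord by (intro sum.cong refl) simp
  then show ?thesis by simp
qed

lemma vf_smooth_lie_bracket:
  assumes "open S" "vf_smooth S A" "vf_smooth S B"
  shows "vf_smooth S (lie_bracket A B)"
  using assms unfolding vf_smooth_def lie_bracket_def vf_apply_def
  by (simp, intro allI smooth_on_diff smooth_on_sum smooth_on_mult smooth_on_pd) auto

lemma smodE:
  assumes "V \<in> smod S G"
  obtains N c Vs where "V = (\<lambda>p. \<Sum>k<(N::nat). c k p *\<^sub>R Vs k p)"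
    "\<forall>k<N. smooth_on S (c k) \<and> Vs k \<in> G"
proof -
  from assms have "\<exists>N c Vs. V = (\<lambda>p. \<Sum>k<(N::nat). c k p *\<^sub>R Vs k p) \<and> (\<forall>k<N. smooth_on S (c k) \<and> Vs k \<in> G)"
    unfolding smod_def by (simp only: mem_Collect_eq)
  then show ?thesis using that by blast
qed

lemma vf_smooth_smod:
  assumes "open S" "\<forall>V\<in>G. vf_smooth S V" "V \<in> smod S G"
  shows "vf_smooth S V"
proof -
  obtain N c Vs where V: "V = (\<lambda>p. \<Sum>k<(N::nat). c k p *\<^sub>R Vs k p)"
    and "\<forall>k<N. smooth_on S (c k) \<and> Vs k \<in> G"
    using assms(3) by (rule smodE)
  then show ?thesis
    using assms(1,2) unfolding vf_smooth_def V
    by (simp add: sum_component, intro allI smooth_on_sum smooth_on_mult) auto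
qed

lemma scaleR_in_smod: "V \<in> G \<Longrightarrow> (\<lambda>p. c *\<^sub>R V p) \<in> smod S G"
  unfolding smod_def
  by (rule CollectI, rule exI[of _ 1], rule exI[of _ "\<lambda>k p. c"], rule exI[of _ "\<lambda>k. V"])
    (auto simp: smooth_on_const)

lemma in_smod: "V \<in> G \<Longrightarrow> V \<in> smod S G"
  using scaleR_in_smod[of V G 1] by simp

lemma vf_apply_times_coord:
  assumes "open S" "q \<in> S" "\<forall>p\<in>S. h p = a p * p $ c" "\<And>l. partially_differentiable_at l a q"
  shows "vf_apply V h q = vf_apply V a q * q $ c + a q * V q $ c"
proof -
  have "vf_apply V h q = (\<Sum>l\<in>UNIV. V q $ l * pd l a q * q $ c + (if l = c then a q * V q $ l else 0))"
    unfolding vf_apply_def using pd_times_coord[OF assms(1-3) assms(4)]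
    by (intro sum.cong refl) (simp add: algebra_simps)
  also have "\<dots> = vf_apply V a q * q $ c + a q * V q $ c"
    by (simp add: sum.distrib vf_apply_def sum_distrib_right)
  finally show ?thesis .
qed

lemma jproj_shift_Some: "jproj (p + t *\<^sub>R axis (Some k) 1) = jproj p + t *\<^sub>R axis k 1"
  by (simp add: jproj_def vec_eq_iff axis_def)

lemma jproj_shift_None: "jproj (p + t *\<^sub>R axis None 1) = jproj p"
  by (simp add: jproj_def vec_eq_iff axis_def)

lemma continuous_on_jproj: "continuous_on A jproj"
proof -
  have "linear jproj" by (auto simp: linear_iff jproj_def vec_eq_iff)
  then show ?thesis by (metis linear_continuous_on linear_conv_bounded_linear)
qed

lemma pd_jproj_Some: "pd (Some k) (\<lambda>q. g (jproj q)) p = pd k g (jproj p)"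
  unfolding pd_def by (simp add: jproj_shift_Some)

lemma pd_jproj_None: "pd None (\<lambda>q. g (jproj q)) p = 0"
  unfolding pd_def by (simp add: jproj_shift_None)

lemma fold_pd_jproj:
  "fold pd is (\<lambda>q. g (jproj q)) =
     (if None \<in> set is then (\<lambda>q. 0) else (\<lambda>q. fold pd (map the is) g (jproj q)))"
proof (induction "is" arbitrary: g)
  case (Cons i "is")
  then show ?case
    by (cases i) (simp_all add: pd_jproj_None[abs_def] pd_jproj_Some[abs_def] fold_pd_const)
qed simp

lemma smooth_on_jproj:
  assumes "smooth_on U g"
  shows "smooth_on {q. jproj q \<in> U} (\<lambda>q. g (jproj q))"
  unfolding smooth_on_def
proof (intro allI conjI ballI)
  fix "is" i and p :: "real^('a option)"
  show "continuous_on {q. jproj q \<in> U} (fold pd is (\<lambda>q. g (jproj q)))"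
  proof (cases "None \<in> set is")
    case False
    have "continuous_on U (fold pd (map the is) g)" using assms smooth_on_def by blast
    then have "continuous_on {q. jproj q \<in> U} (fold pd (map the is) g \<circ> jproj)"
      by (intro continuous_on_compose[OF continuous_on_jproj]) (auto elim: continuous_on_subset)
    then show ?thesis using False by (simp add: fold_pd_jproj o_def)
  qed (simp add: fold_pd_jproj)
  assume "p \<in> {q. jproj q \<in> U}"
  then show "partially_differentiable_at i (fold pd is (\<lambda>q. g (jproj q))) p"
    using assms unfolding smooth_on_def
    by (cases i) (auto simp: fold_pd_jproj jproj_shift_None jproj_shift_Some)
qed

lemma open_jproj_preimage: "open U \<Longrightarrow> open {q. jproj q \<in> U}"
  using open_vimage[OF _ continuous_on_jproj] by (simp add: vimage_def)

lemma connected_jproj_preimage: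
  fixes U :: "(real^'j::finite) set"
  assumes "connected U"
  shows "connected {q::real^('j option). jproj q \<in> U}"
proof -
  define \<phi> :: "(real^'j) \<times> real \<Rightarrow> real^('j option)" where
    "\<phi> = (\<lambda>(u,t). \<chi> c. case c of None \<Rightarrow> t | Some k \<Rightarrow> u $ k)"
  have "q = \<phi> (jproj q, q $ None)" for q
    unfolding \<phi>_def vec_eq_iff by (auto simp: jproj_def split: option.splits)
  then have "{q. jproj q \<in> U} \<subseteq> \<phi> ` (U \<times> UNIV)"
    by (metis (mono_tags, lifting) SigmaI UNIV_I image_eqI mem_Collect_eq subsetI)
  moreover have "\<phi> ` (U \<times> UNIV) \<subseteq> {q. jproj q \<in> U}"
    by (auto simp: \<phi>_def jproj_def)
  ultimately have img: "{q. jproj q \<in> U} = \<phi> ` (U \<times> UNIV)" by (rule subset_antisym)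
  have "continuous_on (U \<times> UNIV) \<phi>"
    unfolding \<phi>_def case_prod_unfold
  proof (rule continuous_on_vec_lambda)
    fix c :: "'j option"
    show "continuous_on (U \<times> UNIV) (\<lambda>x. case c of None \<Rightarrow> snd x | Some k \<Rightarrow> fst x $ k)"
      by (cases c) (auto intro!: continuous_intros)
  qed
  moreover have "connected (U \<times> (UNIV::real set))" using assms by (intro connected_Times) auto
  ultimately show ?thesis unfolding img by (rule connected_continuous_image)
qed

section \<open>The distribution and its symmetries\<close>

locale jet_distribution =
  fixes n :: nat and e :: "nat \<Rightarrow> 'j::finite" and f :: "real^'j \<Rightarrow> real" and U :: "(real^'j) set"
  assumes n_ge_3: "n \<ge> 3"
    and enum: "bij_betw e {..<n+2} (UNIV :: 'j set)"
    and open_U: "open U" and connected_U: "connected U"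
    and smooth_f: "smooth_on U f"
    and f_nondegenerate: "\<forall>p\<in>U. pd (e (n+1)) (pd (e (n+1)) f) p \<noteq> 0"
begin

abbreviation "W \<equiv> {q. jproj q \<in> U}"
abbreviation "X1 \<equiv> X1_field n e f"
abbreviation "X2 \<equiv> X2_field n e"
abbreviation "D \<equiv> sections2 W X1 X2"
abbreviation "xc \<equiv> Some (e 0)"
abbreviation "yc i \<equiv> Some (e (Suc i))"

lemma open_W: "open W"
  using open_jproj_preimage[OF open_U] .

lemma connected_W: "connected W"
  using connected_jproj_preimage[OF connected_U] .

lemma e_eq_iff: "a < n+2 \<Longrightarrow> b < n+2 \<Longrightarrow> e a = e b \<longleftrightarrow> a = b"
  using bij_betw_imp_inj_on[OF enum] by (auto simp: inj_on_def)

lemma yc_neq_xc: "i \<le> n \<Longrightarrow> yc i \<noteq> xc"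
  using e_eq_iff[of "Suc i" 0] by auto

lemma yc_eq_iff: "i \<le> n \<Longrightarrow> i' \<le> n \<Longrightarrow> yc i = yc i' \<longleftrightarrow> i = i'"
  using e_eq_iff[of "Suc i" "Suc i'"] by auto

lemma coord_cases:
  obtains "c = None" | "c = xc" | i where "i \<le> n" "c = yc i"
proof (cases c)
  case (Some k)
  have "k \<in> e ` {..<n+2}" using bij_betw_imp_surj_on[OF enum] by simp
  then obtain m where m: "m < n+2" "e m = k" by auto
  show ?thesis
  proof (cases m)
    case 0
    then show ?thesis using that Some m by blast
  next
    case (Suc i)
    then show ?thesis using that(3)[of i] Some m by auto
  qed
qed (use that in blast)

lemma X1_x: "X1 p $ xc = 1"
  by (simp add: X1_field_def)

lemma X1_y:
  assumes "i < n"
  shows "X1 p $ yc i = p $ yc (Suc i)"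
proof -
  have "e (Suc i) \<noteq> e 0" using e_eq_iff[of "Suc i" 0] assms by simp
  moreover have "\<exists>i'<n. e (Suc i) = e (i' + 1)" using assms by auto
  moreover have "inv_into {..<n+2} e (e (Suc i)) = Suc i"
    using inv_into_f_f[OF bij_betw_imp_inj_on[OF enum], of "Suc i"] assms by simp
  ultimately show ?thesis by (simp add: X1_field_def)
qed

lemma X1_yn: "X1 p $ yc n = 0"
proof -
  have "\<not> (\<exists>i<n. e (Suc n) = e (i + 1))"
  proof
    assume "\<exists>i<n. e (Suc n) = e (i + 1)"
    then obtain i where "i < n" "e (Suc n) = e (i + 1)" by blast
    then show False using e_eq_iff[of "Suc n" "i + 1"] by simp
  qed
  then show ?thesis using e_eq_iff[of "Suc n" 0] unfolding X1_field_def by (simp, blast)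
qed

lemma X1_z: "X1 p $ None = f (jproj p)"
  by (simp add: X1_field_def)

lemma X2_component: "X2 p $ c = (if c = yc n then 1 else 0)"
  by (simp add: X2_field_def axis_def)

lemma smooth_on_X1_component: "smooth_on W (\<lambda>p. X1 p $ c)"
proof (cases c rule: coord_cases)
  case 1
  then show ?thesis using smooth_on_jproj[OF smooth_f] by (simp add: X1_z)
next
  case 2
  then show ?thesis by (simp add: X1_x smooth_on_const)
next
  case (3 i)
  then show ?thesis
    by (cases "i = n") (simp_all add: X1_yn X1_y smooth_on_const smooth_on_coord)
qed

lemma vf_smooth_X1: "vf_smooth W X1"
  unfolding vf_smooth_def using smooth_on_X1_component by blast

lemma vf_smooth_X2: "vf_smooth W X2"
  unfolding vf_smooth_def X2_component by (simp add: smooth_on_const)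

lemma X1_in_D: "X1 \<in> D" and X2_in_D: "X2 \<in> D"
  unfolding sections2_def by (auto intro: in_smod)

lemma vf_smooth_D: "V \<in> D \<Longrightarrow> vf_smooth W V"
  unfolding sections2_def
  using vf_smooth_smod[OF open_W, of "{X1, X2}"] vf_smooth_X1 vf_smooth_X2 by blast

lemma D_pointwise:
  assumes "V \<in> D"
  obtains a b where "V p = a *\<^sub>R X1 p + b *\<^sub>R X2 p"
proof -
  obtain N c Vs where V: "V = (\<lambda>p. \<Sum>k<(N::nat). c k p *\<^sub>R Vs k p)"
    and h: "\<forall>k<N. smooth_on W (c k) \<and> Vs k \<in> {X1, X2}"
    using assms unfolding sections2_def by (rule smodE)
  let ?a = "\<lambda>k. if Vs k = X1 then c k p else 0" and ?b = "\<lambda>k. if Vs k = X1 then 0 else c k p"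
  have "V p = (\<Sum>k<N. ?a k *\<^sub>R X1 p + ?b k *\<^sub>R X2 p)"
    unfolding V using h by (intro sum.cong refl) auto
  also have "\<dots> = (\<Sum>k<N. ?a k) *\<^sub>R X1 p + (\<Sum>k<N. ?b k) *\<^sub>R X2 p"
    by (simp add: sum.distrib scaleR_sum_left)
  finally show ?thesis by (rule that)
qed

lemma sec_in_D_pointwise:
  assumes "sec_in W D V" "q \<in> W"
  obtains a b where "V q = a *\<^sub>R X1 q + b *\<^sub>R X2 q"
  using assms D_pointwise unfolding sec_in_def by metis

lemma vf_apply_X2: "vf_apply X2 g p = pd (yc n) g p"
proof -
  have "vf_apply X2 g p = (\<Sum>i\<in>UNIV. if i = yc n then pd i g p else 0)"
    unfolding vf_apply_def X2_component by (intro sum.cong refl) simp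
  then show ?thesis by simp
qed

lemma lie_bracket_X2_left: "lie_bracket X2 V p $ j = pd (yc n) (\<lambda>q. V q $ j) p"
  unfolding lie_bracket_def by (simp add: vf_apply_X2 X2_component vf_apply_const)

lemma lie_bracket_X2_right: "lie_bracket V X2 p $ j = - pd (yc n) (\<lambda>q. V q $ j) p"
  unfolding lie_bracket_def by (simp add: vf_apply_X2 X2_component vf_apply_const)

lemma X1_component_fun:
  "(\<lambda>q. X1 q $ xc) = (\<lambda>q. 1)"
  "(\<lambda>q. X1 q $ None) = (\<lambda>q. f (jproj q))"
  "(\<lambda>q. X1 q $ yc n) = (\<lambda>q. 0)"
  "i < n \<Longrightarrow> (\<lambda>q. X1 q $ yc i) = (\<lambda>q. q $ yc (Suc i))"
  by (simp_all add: X1_x X1_z X1_yn X1_y)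

lemma pd_y_X1_component:
  assumes "1 \<le> m" "m \<le> n"
  shows "pd (yc m) (\<lambda>p. X1 p $ l) q =
           (if l = None then pd (e (Suc m)) f (jproj q) else if l = yc (m-1) then 1 else 0)"
proof (cases l rule: coord_cases)
  case 1
  then show ?thesis by (simp add: X1_component_fun pd_jproj_Some)
next
  case 2
  then show ?thesis using assms e_eq_iff[of 0 m] by (auto simp: X1_component_fun pd_const)
next
  case (3 i)
  show ?thesis
  proof (cases "i = n")
    case True
    then show ?thesis
      using 3 assms yc_eq_iff[of n "m-1"] by (simp add: X1_component_fun pd_const)
  next
    case False
    then show ?thesis
      using 3 assms yc_eq_iff[of m "Suc i"] yc_eq_iff[of i "m-1"]
      by (auto simp: X1_component_fun pd_coord)
  qed
qed

abbreviation "X21 \<equiv> lie_bracket X2 X1"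
abbreviation "X221 \<equiv> lie_bracket X2 X21"

lemma X21_component:
  "X21 p $ j = (if j = None then pd (e (Suc n)) f (jproj p) else if j = yc (n-1) then 1 else 0)"
  using n_ge_3 by (simp add: lie_bracket_X2_left pd_y_X1_component)

lemma X221_component:
  "X221 p $ j = (if j = None then pd (e (Suc n)) (pd (e (Suc n)) f) (jproj p) else 0)"
proof -
  have "(\<lambda>q. X21 q $ j) =
          (if j = None then (\<lambda>q. pd (e (Suc n)) f (jproj q)) else (\<lambda>q. if j = yc (n-1) then 1 else 0))"
    by (auto simp: X21_component)
  then show ?thesis by (simp add: lie_bracket_X2_left[of X21] pd_jproj_Some pd_const)
qed

subsection \<open>The derived flag and the contact forms\<close>

(* V is annihilated by the contact forms dy_i - y_(i+1) dx with i < m. *)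
definition contact_annihilated :: "nat \<Rightarrow> (real^('j option) \<Rightarrow> real^('j option)) \<Rightarrow> bool" where
  "contact_annihilated m V \<longleftrightarrow> (\<forall>q\<in>W. \<forall>i<m. V q $ yc i = V q $ xc * q $ yc (Suc i))"

lemma contact_annihilated_mono:
  "m' \<le> m \<Longrightarrow> contact_annihilated m V \<Longrightarrow> contact_annihilated m' V"
  unfolding contact_annihilated_def by auto

lemma contact_annihilated_D:
  assumes "V \<in> D"
  shows "contact_annihilated n V"
  unfolding contact_annihilated_def
proof (intro ballI allI impI)
  fix q i assume "q \<in> W" "i < n"
  obtain a b where "V q = a *\<^sub>R X1 q + b *\<^sub>R X2 q" using D_pointwise[OF assms] .
  then show "V q $ yc i = V q $ xc * q $ yc (Suc i)"
    using \<open>i < n\<close> yc_eq_iff[of i n] yc_neq_xc[of n] by (simp add: X1_y X1_x X2_component)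
qed

lemma contact_annihilated_smod:
  assumes "\<forall>V\<in>G. contact_annihilated m V" "V \<in> smod W G"
  shows "contact_annihilated m V"
proof -
  obtain N c Vs where V: "V = (\<lambda>p. \<Sum>k<(N::nat). c k p *\<^sub>R Vs k p)"
    and h: "\<forall>k<N. smooth_on W (c k) \<and> Vs k \<in> G"
    using assms(2) by (rule smodE)
  show ?thesis unfolding contact_annihilated_def
  proof (intro ballI allI impI)
    fix q i assume q: "q \<in> W" and i: "i < m"
    have "V q $ yc i = (\<Sum>k<N. c k q * Vs k q $ yc i)" by (simp add: V sum_component)
    also have "\<dots> = (\<Sum>k<N. c k q * Vs k q $ xc * q $ yc (Suc i))"
      using h assms(1) q i unfolding contact_annihilated_def by (intro sum.cong refl) auto
    also have "\<dots> = V q $ xc * q $ yc (Suc i)" by (simp add: V sum_component sum_distrib_right)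
    finally show "V q $ yc i = V q $ xc * q $ yc (Suc i)" .
  qed
qed

lemma contact_annihilated_lie_bracket:
  assumes A: "vf_smooth W A" "contact_annihilated n A"
    and B: "vf_smooth W B" "contact_annihilated (Suc m) B" and "Suc m \<le> n"
  shows "contact_annihilated m (lie_bracket A B)"
  unfolding contact_annihilated_def
proof (intro ballI allI impI)
  fix q i assume q: "q \<in> W" and "i < m"
  then have i: "i < n" "Suc i < n" "Suc i < Suc m" using \<open>Suc m \<le> n\<close> by auto
  have "vf_apply A (\<lambda>p. B p $ yc i) q = vf_apply A (\<lambda>p. B p $ xc) q * q $ yc (Suc i) + B q $ xc * A q $ yc (Suc i)"
    using B i q unfolding contact_annihilated_def vf_smooth_def
    by (intro vf_apply_times_coord[OF open_W q] smooth_on_imp_partially_differentiable_at) auto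
  moreover have "vf_apply B (\<lambda>p. A p $ yc i) q = vf_apply B (\<lambda>p. A p $ xc) q * q $ yc (Suc i) + A q $ xc * B q $ yc (Suc i)"
    using A i q unfolding contact_annihilated_def vf_smooth_def
    by (intro vf_apply_times_coord[OF open_W q] smooth_on_imp_partially_differentiable_at) auto
  moreover have "A q $ yc (Suc i) = A q $ xc * q $ yc (Suc (Suc i))"
    and "B q $ yc (Suc i) = B q $ xc * q $ yc (Suc (Suc i))"
    using A(2) B(2) q i unfolding contact_annihilated_def by auto
  ultimately show "lie_bracket A B q $ yc i = lie_bracket A B q $ xc * q $ yc (Suc i)"
    unfolding lie_bracket_def by (simp add: algebra_simps)
qed

lemma derived2_eq: "derived W D 2 = smod W (D \<union> {lie_bracket A B | A B. A \<in> D \<and> B \<in> D})"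
  by (simp add: numeral_2_eq_2)

lemma derived3_eq:
  "derived W D 3 = smod W (derived W D 2 \<union> {lie_bracket A B | A B. A \<in> D \<and> B \<in> derived W D 2})"
  by (simp add: numeral_3_eq_3 numeral_2_eq_2)

lemma derived2_smooth_contact_annihilated:
  assumes "V \<in> derived W D 2"
  shows "vf_smooth W V \<and> contact_annihilated (n - 1) V"
proof -
  have "vf_smooth W V \<and> contact_annihilated (n-1) V"
    if "V \<in> D \<union> {lie_bracket A B | A B. A \<in> D \<and> B \<in> D}" for V
    using that
  proof
    assume "V \<in> D"
    then show ?thesis using vf_smooth_D contact_annihilated_D contact_annihilated_mono[of "n-1" n] by simp
  next
    assume "V \<in> {lie_bracket A B | A B. A \<in> D \<and> B \<in> D}"
    then obtain A B where AB: "V = lie_bracket A B" "A \<in> D" "B \<in> D" by blast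
    have "contact_annihilated (n-1) (lie_bracket A B)"
      using n_ge_3 contact_annihilated_mono[OF _ contact_annihilated_D[OF AB(3)]]
      by (intro contact_annihilated_lie_bracket vf_smooth_D contact_annihilated_D AB) auto
    then show ?thesis using AB vf_smooth_lie_bracket[OF open_W vf_smooth_D vf_smooth_D] by simp
  qed
  then show ?thesis
    using assms vf_smooth_smod[OF open_W, of "D \<union> {lie_bracket A B | A B. A \<in> D \<and> B \<in> D}" V]
      contact_annihilated_smod[of "D \<union> {lie_bracket A B | A B. A \<in> D \<and> B \<in> D}" "n-1" V]
    unfolding derived2_eq by blast
qed

lemma contact_annihilated_derived3:
  assumes "V \<in> derived W D 3"
  shows "contact_annihilated (n - 2) V"
proof -
  have "contact_annihilated (n-2) V"
    if "V \<in> derived W D 2 \<union> {lie_bracket A B | A B. A \<in> D \<and> B \<in> derived W D 2}" for V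
    using that
  proof
    assume "V \<in> derived W D 2"
    then show ?thesis
      using derived2_smooth_contact_annihilated contact_annihilated_mono[of "n-2" "n-1"] by simp
  next
    assume "V \<in> {lie_bracket A B | A B. A \<in> D \<and> B \<in> derived W D 2}"
    then obtain A B where AB: "V = lie_bracket A B" "A \<in> D" "B \<in> derived W D 2" by blast
    have "Suc (n-2) = n-1" using n_ge_3 by simp
    then show ?thesis
      using AB n_ge_3 derived2_smooth_contact_annihilated[OF AB(3)]
      by (auto intro!: contact_annihilated_lie_bracket vf_smooth_D contact_annihilated_D)
  qed
  then show ?thesis
    using assms contact_annihilated_smod[of "derived W D 2 \<union> {lie_bracket A B | A B. A \<in> D \<and> B \<in> derived W D 2}" "n-2" V]
    unfolding derived3_eq by blast
qed

lemma X21_in_derived2: "X21 \<in> derived W D 2"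
  unfolding derived2_eq by (rule in_smod) (use X1_in_D X2_in_D in blast)

lemma lies_in_derived3_vertical: "lies_in W (derived W D 3) (\<lambda>q. c *\<^sub>R axis None 1)"
  unfolding lies_in_def
proof (intro ballI CollectI)
  fix q assume "q \<in> W"
  define F where "F = pd (e (Suc n)) (pd (e (Suc n)) f) (jproj q)"
  have "F \<noteq> 0" using f_nondegenerate \<open>q \<in> W\<close> unfolding F_def by simp
  then have "c *\<^sub>R axis None 1 = (c / F) *\<^sub>R X221 q"
    by (simp add: vec_eq_iff X221_component F_def[symmetric] axis_def)
  moreover have "(\<lambda>p. (c / F) *\<^sub>R X221 p) \<in> derived W D 3"
    unfolding derived3_eq by (rule scaleR_in_smod) (use X2_in_D X21_in_derived2 in blast)
  ultimately show "\<exists>V. c *\<^sub>R axis None 1 = V q \<and> V \<in> derived W D 3"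
    by (intro exI[of _ "\<lambda>p. (c / F) *\<^sub>R X221 p"]) simp
qed

lemma generator_z_invariant: "V \<in> {X1, X2} \<Longrightarrow> V (p + t *\<^sub>R axis None 1) = V p"
proof -
  have "(p + t *\<^sub>R axis None 1) $ Some k = p $ Some k" for k by (simp add: axis_def)
  then show "V \<in> {X1, X2} \<Longrightarrow> V (p + t *\<^sub>R axis None 1) = V p"
    unfolding X1_field_def X2_field_def by (auto simp only: jproj_shift_None insert_iff empty_iff)
qed

lemma inf_symmetry_vertical:
  assumes "vf_smooth W Y" "\<forall>q\<in>W. Y q = c *\<^sub>R axis None 1"
  shows "inf_symmetry W D Y"
  unfolding inf_symmetry_def
proof (intro conjI ballI assms(1))
  fix V assume "V \<in> D"
  then obtain N a Vs where V: "V = (\<lambda>p. \<Sum>k<(N::nat). a k p *\<^sub>R Vs k p)"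
    and h: "\<forall>k<N. smooth_on W (a k) \<and> Vs k \<in> {X1, X2}"
    unfolding sections2_def by (rule smodE)
  define V' where "V' = (\<lambda>p. \<Sum>k<N. (c * pd None (a k) p) *\<^sub>R Vs k p)"
  have "V' \<in> D"
    unfolding sections2_def smod_def V'_def
    by (rule CollectI, rule exI[of _ N], rule exI[of _ "\<lambda>k p. c * pd None (a k) p"], rule exI[of _ Vs])
      (use h in \<open>auto intro!: smooth_on_mult open_W smooth_on_const smooth_on_pd\<close>)
  moreover have "lie_bracket Y V p $ j = V' p $ j" if p: "p \<in> W" for p j
  proof -
    have "pd i (\<lambda>q. Y q $ j) p = 0" for i
      using pd_cong_open[OF open_W p, of "\<lambda>q. Y q $ j" "\<lambda>q. (c *\<^sub>R axis None 1) $ j"] assms(2)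
      by (simp add: pd_const)
    then have YV: "vf_apply V (\<lambda>q. Y q $ j) p = 0" by (simp add: vf_apply_def)
    have "vf_apply Y (\<lambda>q. V q $ j) p = (\<Sum>i\<in>UNIV. if i = None then c * pd i (\<lambda>q. V q $ j) p else 0)"
      unfolding vf_apply_def using assms(2) p by (intro sum.cong refl) (simp add: axis_def)
    then have VY: "vf_apply Y (\<lambda>q. V q $ j) p = c * pd None (\<lambda>q. V q $ j) p" by simp
    have "pd None (\<lambda>q. a k q * Vs k q $ j) p = pd None (a k) p * Vs k p $ j
          \<and> partially_differentiable_at None (\<lambda>q. a k q * Vs k q $ j) p" if "k < N" for k
    proof -
      have "\<forall>t. Vs k (p + t *\<^sub>R axis None 1) $ j = Vs k p $ j"
        using h that generator_z_invariant[of "Vs k" p] by auto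
      moreover have "partially_differentiable_at None (a k) p"
        using h that p smooth_on_imp_partially_differentiable_at by blast
      ultimately show ?thesis
        using pd_mult[where i = None and g = "a k" and h = "\<lambda>q. Vs k q $ j"]
          pd_eq_0_if_constant_on_line[of "\<lambda>q. Vs k q $ j"] by simp
    qed
    then have "pd None (\<lambda>q. V q $ j) p = (\<Sum>k<N. pd None (a k) p * Vs k p $ j)"
      using pd_sum[where A = "{..<N}" and i = None and g = "\<lambda>k q. a k q * Vs k q $ j" and p = p] by (simp add: V sum_component)
    then show ?thesis
      unfolding lie_bracket_def V'_def using YV VY
      by (simp add: sum_component sum_distrib_left mult.assoc)
  qed
  ultimately show "sec_in W D (lie_bracket Y V)" unfolding sec_in_def vec_eq_iff by blast
qed

subsection \<open>Common first integrals of the generators\<close>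

(* Differentiate X1 g = 0 along y_m: since dg/dy_m = 0, only the commutator
   [d/dy_m, X1] = d/dy_(m-1) + f_(y_m) d/dz contributes. *)
lemma first_integral_pd_y_pred:
  assumes m: "1 \<le> m" "m \<le> n" and g: "smooth_on W g"
    and ym: "\<forall>q\<in>W. pd (yc m) g q = 0" and X1g: "\<forall>q\<in>W. vf_apply X1 g q = 0" and q: "q \<in> W"
  shows "pd (yc (m-1)) g q + pd (e (Suc m)) f (jproj q) * pd None g q = 0"
proof -
  have summand: "pd (yc m) (\<lambda>p. X1 p $ l * pd l g p) q = pd (yc m) (\<lambda>p. X1 p $ l) q * pd l g q
     \<and> partially_differentiable_at (yc m) (\<lambda>p. X1 p $ l * pd l g p) q" for l
  proof -
    have "partially_differentiable_at (yc m) (\<lambda>p. X1 p $ l) q"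
      and "partially_differentiable_at (yc m) (pd l g) q"
      using smooth_on_imp_partially_differentiable_at[OF _ q] smooth_on_X1_component smooth_on_pd[OF g]
      by blast+
    moreover have "pd (yc m) (pd l g) q = 0"
      using pd_pd_eq_0[OF open_W smooth_on_imp_partially_differentiable_on[OF g] ym q] .
    ultimately show ?thesis using pd_mult[where i = "yc m"] by simp
  qed
  have "0 = pd (yc m) (vf_apply X1 g) q"
    using pd_cong_open[OF open_W q, of "vf_apply X1 g" "\<lambda>p. 0"] X1g by (simp add: pd_const)
  also have "\<dots> = (\<Sum>l\<in>UNIV. pd (yc m) (\<lambda>p. X1 p $ l * pd l g p) q)"
    unfolding vf_apply_def[abs_def]
    by (rule pd_sum[where g = "\<lambda>l p. X1 p $ l * pd l g p"]) (use summand in blast)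
  also have "\<dots> = (\<Sum>l\<in>UNIV. (if l = None then pd (e (Suc m)) f (jproj q) * pd None g q else 0)
                              + (if l = yc (m-1) then pd (yc (m-1)) g q else 0))"
    using summand by (intro sum.cong refl) (simp add: pd_y_X1_component[OF m])
  also have "\<dots> = pd (e (Suc m)) f (jproj q) * pd None g q + pd (yc (m-1)) g q"
    by (simp add: sum.distrib)
  finally show ?thesis by simp
qed

(* The y_n-derivative of the case m = n leaves f_(y_n y_n) dg/dz. *)
lemma first_integral_pd_z:
  assumes g: "smooth_on W g"
    and yn: "\<forall>q\<in>W. pd (yc n) g q = 0" and X1g: "\<forall>q\<in>W. vf_apply X1 g q = 0" and q: "q \<in> W"
  shows "pd None g q = 0"
proof -
  define F where "F = pd (e (Suc n)) f"
  have "\<forall>p\<in>W. pd (yc (n-1)) g p + F (jproj p) * pd None g p = 0"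
    using first_integral_pd_y_pred[OF _ _ g yn X1g] n_ge_3 unfolding F_def by auto
  then have "0 = pd (yc n) (\<lambda>p. pd (yc (n-1)) g p + F (jproj p) * pd None g p) q"
    using pd_cong_open[OF open_W q, of _ "\<lambda>p. 0"] by (simp add: pd_const)
  moreover have "partially_differentiable_at (yc n) (pd (yc (n-1)) g) q"
    and dF: "partially_differentiable_at (yc n) (\<lambda>p. F (jproj p)) q"
    and "partially_differentiable_at (yc n) (pd None g) q"
    using smooth_on_imp_partially_differentiable_at[OF _ q] smooth_on_pd[OF g]
      smooth_on_jproj[OF smooth_on_pd[OF smooth_f]] unfolding F_def by blast+
  moreover have "pd (yc n) (pd l g) q = 0" for l
    using pd_pd_eq_0[OF open_W smooth_on_imp_partially_differentiable_on[OF g] yn q] .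
  ultimately have "pd (yc n) (\<lambda>p. F (jproj p)) q * pd None g q = 0"
    by (simp add: pd_add pd_mult)
  moreover have "pd (yc n) (\<lambda>p. F (jproj p)) q \<noteq> 0"
    using f_nondegenerate q by (simp add: pd_jproj_Some F_def)
  ultimately show ?thesis by simp
qed

lemma first_integral_pd_eq_0:
  assumes g: "smooth_on W g"
    and yn: "\<forall>q\<in>W. pd (yc n) g q = 0" and X1g: "\<forall>q\<in>W. vf_apply X1 g q = 0" and q: "q \<in> W"
  shows "pd l g q = 0"
proof -
  have z: "\<forall>q\<in>W. pd None g q = 0" using first_integral_pd_z[OF g yn X1g] by blast
  have y_down: "\<forall>q\<in>W. pd (yc (n - k)) g q = 0" if "k \<le> n" for k
    using that
  proof (induction k)
    case (Suc k)
    then have "1 \<le> n - k" "n - k - 1 = n - Suc k" by auto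
    then show ?case
      using first_integral_pd_y_pred[of "n - k", OF _ _ g _ X1g] Suc z by simp
  qed (use yn in simp)
  have y: "pd (yc i) g q = 0" if "i \<le> n" for i
    using y_down[of "n - i"] that q by simp
  have not_x: "pd l g q = 0" if "l \<noteq> xc" for l
    using q z y that by (cases l rule: coord_cases) auto
  have "vf_apply X1 g q = (\<Sum>l\<in>UNIV. if l = xc then pd xc g q else 0)"
    unfolding vf_apply_def using not_x by (intro sum.cong refl) (simp add: X1_x)
  then have "pd xc g q = 0" using X1g q by simp
  then show ?thesis using not_x by (cases "l = xc") auto
qed

lemma first_integral_constant:
  assumes "smooth_on W g" "\<forall>q\<in>W. pd (yc n) g q = 0" "\<forall>q\<in>W. vf_apply X1 g q = 0"
  shows "\<exists>c. \<forall>q\<in>W. g q = c"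
  using first_integral_pd_eq_0[OF assms] smooth_on_imp_partially_differentiable_on[OF assms(1)]
  by (intro pd_eq_0_imp_constant[OF open_W connected_W]) auto

subsection \<open>Symmetries lying in the third derived distribution\<close>

lemma symmetry_bracket_X1:
  assumes "inf_symmetry W D Y" "q \<in> W"
  shows "i < n \<Longrightarrow> Y q $ yc (Suc i) =
           vf_apply X1 (\<lambda>p. Y p $ yc i) q - vf_apply X1 (\<lambda>p. Y p $ xc) q * q $ yc (Suc i)"
    and "vf_apply Y (\<lambda>p. f (jproj p)) q =
           vf_apply X1 (\<lambda>p. Y p $ None) q - vf_apply X1 (\<lambda>p. Y p $ xc) q * f (jproj q)"
proof -
  have "sec_in W D (lie_bracket Y X1)" using assms(1) X1_in_D unfolding inf_symmetry_def by blast
  then obtain a b where ab: "lie_bracket Y X1 q = a *\<^sub>R X1 q + b *\<^sub>R X2 q"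
    using sec_in_D_pointwise assms(2) by blast
  have comp: "vf_apply Y (\<lambda>p. X1 p $ j) q - vf_apply X1 (\<lambda>p. Y p $ j) q = a * X1 q $ j + b * X2 q $ j"
    for j using arg_cong[OF ab, of "\<lambda>v. v $ j"] unfolding lie_bracket_def by simp
  have "xc \<noteq> yc n" using yc_neq_xc[of n] by simp
  then have a: "a = - vf_apply X1 (\<lambda>p. Y p $ xc) q"
    using comp[of xc] by (simp add: X1_component_fun vf_apply_const X1_x X2_component)
  show "i < n \<Longrightarrow> Y q $ yc (Suc i) =
          vf_apply X1 (\<lambda>p. Y p $ yc i) q - vf_apply X1 (\<lambda>p. Y p $ xc) q * q $ yc (Suc i)"
    using comp[of "yc i"] yc_eq_iff[of i n]
    by (simp add: a X1_component_fun vf_apply_coord X1_y X2_component)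
  show "vf_apply Y (\<lambda>p. f (jproj p)) q =
          vf_apply X1 (\<lambda>p. Y p $ None) q - vf_apply X1 (\<lambda>p. Y p $ xc) q * f (jproj q)"
    using comp[of None] by (simp add: a X1_component_fun X1_z X2_component)
qed

lemma symmetry_bracket_X2:
  assumes "inf_symmetry W D Y" "q \<in> W"
  shows "pd (yc n) (\<lambda>p. Y p $ yc (n-1)) q = pd (yc n) (\<lambda>p. Y p $ xc) q * q $ yc n"
    and "pd (yc n) (\<lambda>p. Y p $ None) q = pd (yc n) (\<lambda>p. Y p $ xc) q * f (jproj q)"
proof -
  have "sec_in W D (lie_bracket Y X2)" using assms(1) X2_in_D unfolding inf_symmetry_def by blast
  then obtain a b where ab: "lie_bracket Y X2 q = a *\<^sub>R X1 q + b *\<^sub>R X2 q"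
    using sec_in_D_pointwise assms(2) by blast
  have comp: "- pd (yc n) (\<lambda>p. Y p $ j) q = a * X1 q $ j + b * X2 q $ j" for j
    using arg_cong[OF ab, of "\<lambda>v. v $ j"] by (simp add: lie_bracket_X2_right)
  have "xc \<noteq> yc n" using yc_neq_xc[of n] by simp
  then have a: "a = - pd (yc n) (\<lambda>p. Y p $ xc) q" using comp[of xc] by (simp add: X1_x X2_component)
  have "yc (n-1) \<noteq> yc n" "Suc (n-1) = n" using yc_eq_iff[of "n-1" n] n_ge_3 by auto
  then show "pd (yc n) (\<lambda>p. Y p $ yc (n-1)) q = pd (yc n) (\<lambda>p. Y p $ xc) q * q $ yc n"
    using comp[of "yc (n-1)"] X1_y[of "n-1" q] n_ge_3 by (simp add: a X2_component)
  show "pd (yc n) (\<lambda>p. Y p $ None) q = pd (yc n) (\<lambda>p. Y p $ xc) q * f (jproj q)"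
    using comp[of None] by (simp add: a X1_z X2_component)
qed

lemma symmetry_contact_step:
  assumes "vf_smooth W Y" "inf_symmetry W D Y" "j < n"
    and "\<forall>p\<in>W. Y p $ yc j = Y p $ xc * p $ yc (Suc j)" and "q \<in> W"
  shows "Y q $ yc (Suc j) = Y q $ xc * X1 q $ yc (Suc j)"
proof -
  have "vf_apply X1 (\<lambda>p. Y p $ yc j) q =
          vf_apply X1 (\<lambda>p. Y p $ xc) q * q $ yc (Suc j) + Y q $ xc * X1 q $ yc (Suc j)"
    using assms(1,4) smooth_on_imp_partially_differentiable_at[OF _ assms(5)]
    unfolding vf_smooth_def by (intro vf_apply_times_coord[OF open_W assms(5)]) auto
  then show ?thesis using symmetry_bracket_X1(1)[OF assms(2,5,3)] by simp
qed

lemma symmetry_contact: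
  assumes Y: "vf_smooth W Y" "inf_symmetry W D Y" "lies_in W (derived W D 3) Y" and "j < n"
  shows "\<forall>q\<in>W. Y q $ yc j = Y q $ xc * q $ yc (Suc j)"
  using \<open>j < n\<close>
proof (induction j)
  case 0
  show ?case
  proof
    fix q assume q: "q \<in> W"
    obtain V where "Y q = V q" "V \<in> derived W D 3" using Y(3) q unfolding lies_in_def by blast
    then show "Y q $ yc 0 = Y q $ xc * q $ yc (Suc 0)"
      using contact_annihilated_derived3 n_ge_3 q unfolding contact_annihilated_def by auto
  qed
next
  case (Suc j)
  then show ?case
    using symmetry_contact_step[OF Y(1,2) _ Suc.IH] by (simp add: X1_y)
qed

lemma symmetry_in_derived3_jet_zero:
  assumes Y: "vf_smooth W Y" "inf_symmetry W D Y" "lies_in W (derived W D 3) Y"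
  shows "\<forall>q\<in>W. \<forall>k. Y q $ Some k = 0"
proof -
  have n: "n - 1 < n" "Suc (n - 1) = n" using n_ge_3 by auto
  have contact: "\<forall>p\<in>W. Y p $ yc (n-1) = Y p $ xc * p $ yc n"
    using symmetry_contact[OF Y n(1)] unfolding n(2) .
  have x: "Y p $ xc = 0" if p: "p \<in> W" for p
  proof -
    have "smooth_on W (\<lambda>p. Y p $ xc)" using Y(1) unfolding vf_smooth_def ..
    then have "pd (yc n) (\<lambda>p. Y p $ yc (n-1)) p = pd (yc n) (\<lambda>p. Y p $ xc) p * p $ yc n + Y p $ xc"
      using pd_times_coord[OF open_W p contact smooth_on_imp_partially_differentiable_at[OF _ p]]
      by simp
    then show ?thesis using symmetry_bracket_X2(1)[OF Y(2) p] by simp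
  qed
  have yn: "Y p $ yc n = 0" if "p \<in> W" for p
    using symmetry_contact_step[OF Y(1,2) n(1) symmetry_contact[OF Y n(1)] that] n(2) x[OF that]
    by simp
  show ?thesis
  proof (intro ballI allI)
    fix q k assume q: "q \<in> W"
    show "Y q $ Some k = 0"
    proof (cases "Some k" rule: coord_cases)
      case (3 i)
      then show ?thesis
        using yn[OF q] x[OF q] symmetry_contact[OF Y, of i] q by (cases "i = n") auto
    qed (use x q in auto)
  qed
qed

lemma symmetry_in_derived3_z_first_integral:
  assumes Y: "vf_smooth W Y" "inf_symmetry W D Y" "lies_in W (derived W D 3) Y"
  shows "\<forall>q\<in>W. pd (yc n) (\<lambda>p. Y p $ None) q = 0"
    and "\<forall>q\<in>W. vf_apply X1 (\<lambda>p. Y p $ None) q = 0"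
proof -
  have jet: "\<forall>q\<in>W. \<forall>k. Y q $ Some k = 0" by (rule symmetry_in_derived3_jet_zero[OF Y])
  have pd_x: "pd l (\<lambda>p. Y p $ xc) q = 0" if "q \<in> W" for l q
    using pd_cong_open[OF open_W that, of _ "\<lambda>p. 0"] jet by (simp add: pd_const)
  show "\<forall>q\<in>W. pd (yc n) (\<lambda>p. Y p $ None) q = 0"
    using symmetry_bracket_X2(2)[OF Y(2)] pd_x by simp
  have summand: "Y q $ l * pd l (\<lambda>p. f (jproj p)) q = 0" if "q \<in> W" for q l
    using jet that by (cases l) (simp_all add: pd_jproj_None)
  have "vf_apply Y (\<lambda>p. f (jproj p)) q = 0" if "q \<in> W" for q
    unfolding vf_apply_def by (intro sum.neutral ballI summand that)
  moreover have "vf_apply X1 (\<lambda>p. Y p $ xc) q = 0" if "q \<in> W" for q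
    unfolding vf_apply_def using pd_x[OF that] by simp
  ultimately show "\<forall>q\<in>W. vf_apply X1 (\<lambda>p. Y p $ None) q = 0"
    using symmetry_bracket_X1(2)[OF Y(2)] by simp
qed

lemma symmetry_in_derived3_vertical:
  assumes Y: "vf_smooth W Y" "inf_symmetry W D Y" "lies_in W (derived W D 3) Y"
  shows "\<exists>c. \<forall>q\<in>W. Y q = c *\<^sub>R axis None 1"
proof -
  have "smooth_on W (\<lambda>p. Y p $ None)" using Y(1) unfolding vf_smooth_def ..
  then obtain c where c: "\<forall>q\<in>W. Y q $ None = c"
    using first_integral_constant symmetry_in_derived3_z_first_integral[OF Y] by blast
  have "Y q $ j = (c *\<^sub>R axis None 1) $ j" if "q \<in> W" for q j
    using c symmetry_in_derived3_jet_zero[OF Y] that by (cases j) (simp_all add: axis_def)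
  then show ?thesis by (auto simp: vec_eq_iff)
qed

end

theorem lemma2p1:
  fixes n :: nat and e :: "nat \<Rightarrow> 'j::finite" and f :: "real^'j \<Rightarrow> real"
    and U :: "(real^'j) set"
  assumes n3: "n \<ge> 3"
    and enum: "bij_betw e {..<n+2} (UNIV :: 'j set)"
    and U_open: "open U" and U_conn: "connected U"
    and f_smooth: "smooth_on U f"
    and f_nondeg: "\<forall>p\<in>U. pd (e (n+1)) (pd (e (n+1)) f) p \<noteq> 0"
  shows "\<forall>Y. vf_smooth {q. jproj q \<in> U} Y \<longrightarrow>
           ((inf_symmetry {q. jproj q \<in> U} (sections2 {q. jproj q \<in> U} (X1_field n e f) (X2_field n e)) Y
             \<and> lies_in {q. jproj q \<in> U}
                 (derived {q. jproj q \<in> U} (sections2 {q. jproj q \<in> U} (X1_field n e f) (X2_field n e)) 3) Y)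
            \<longleftrightarrow> (\<exists>c::real. \<forall>q\<in>{q. jproj q \<in> U}. Y q = c *\<^sub>R axis None 1))"
proof (intro allI impI iffI)
  interpret jet_distribution n e f U
    using assms by unfold_locales
  fix Y assume Y: "vf_smooth W Y"
  show "\<exists>c. \<forall>q\<in>W. Y q = c *\<^sub>R axis None 1" if "inf_symmetry W D Y \<and> lies_in W (derived W D 3) Y"
    using symmetry_in_derived3_vertical[OF Y] that by blast
  show "inf_symmetry W D Y \<and> lies_in W (derived W D 3) Y"
    if vertical: "\<exists>c. \<forall>q\<in>W. Y q = c *\<^sub>R axis None 1"
  proof -
    obtain c where c: "\<forall>q\<in>W. Y q = c *\<^sub>R axis None 1" using vertical by blast
    then show ?thesis
      using inf_symmetry_vertical[OF Y c] lies_in_derived3_vertical[of c] unfolding lies_in_def by simp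
  qed
qed

end
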